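(* Let $\phi$ be an N-function satisfying the structural assumption below, let $\Omega\subset\mathbb{R}^m$ be bounded open, $t_0>0$, $Q:=[-t_0,0)\times\Omega$, and let $w\in L^\phi(-t_0,0;W^{1,\phi}_0(\Omega))$ and $G\in L^{\phi^*}(Q)$ satisfy $\partial_t w=\operatorname{div}G$ on $Q$ and $w(-t_0,\cdot)=0$. Define $\gamma>0$ by $$\phi(\gamma):=\frac1{|Q|}\int_Q\phi(|\nabla w|)\,dz+\frac1{|Q|}\int_Q\phi^*(|G|)\,dz.$$ Then for every $m_0\in\mathbb{N}$ there exists $\lambda\in[\gamma,2^{m_0}\gamma]$ such that, with $\alpha=\alpha(\lambda):=\lambda/\phi'(\lambda)$, $$|\{\mathcal{M}^\alpha(\nabla w\,\chi_Q)>\lambda\}|+|\{\mathcal{M}^\alpha(G\chi_Q)>\phi'(\lambda)\}|\le c\,\frac{\phi(\gamma)}{m_0\,\phi(\lambda)}|Q|,$$ with $c$ independent of $m_0$ and $\gamma$.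
   Context: N-function: convex $\phi:[0,\infty)\to[0,\infty)$, $\phi(0)=0$, with right-continuous nondecreasing derivative $\phi'$, $\phi'(0)=0$, $\phi'>0$ on $(0,\infty)$, $\phi'(t)\to\infty$. Structural assumption: $\phi\in C^1([0,\infty))\cap C^2((0,\infty))$ and $\phi'(t)\sim t\phi''(t)$ uniformly in $t>0$. $\phi^*(t)=\sup_{s\ge0}(st-\phi(s))$. An $\alpha$-parabolic cylinder of radius $r$ is $(t_1-\alpha r^2,t_1+\alpha r^2)\times B_r(x_1)$; for $g\in L^1_{loc}(\mathbb{R}^{m+1})$, $(\mathcal{M}^\alpha g)(z):=\sup\{\frac1{|Q'|}\int_{Q'}|g|:Q'\ \alpha\text{-parabolic cylinder},\ z\in Q'\}$; $\chi_Q$ is the indicator of $Q$ and $\nabla w\chi_Q$, $G\chi_Q$ are regarded as functions on $\mathbb{R}^{m+1}$. *)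

theory Defs
  imports "HOL-Analysis.Analysis"
begin

definition Nder :: "(real \<Rightarrow> real) \<Rightarrow> real \<Rightarrow> real" where
  "Nder \<phi> t = (THE d. (\<phi> has_real_derivative d) (at t within {t..}))"

definition N_function :: "(real \<Rightarrow> real) \<Rightarrow> bool" where
  "N_function \<phi> \<longleftrightarrow>
     convex_on {0..} \<phi> \<and> \<phi> 0 = 0 \<and> (\<forall>t\<ge>0. 0 \<le> \<phi> t) \<and>
     (\<forall>t\<ge>0. \<exists>d. (\<phi> has_real_derivative d) (at t within {t..})) \<and>
     mono_on {0..} (Nder \<phi>) \<and>
     (\<forall>t\<ge>0. continuous (at t within {t..}) (Nder \<phi>)) \<and>
     Nder \<phi> 0 = 0 \<and> (\<forall>t>0. 0 < Nder \<phi> t) \<and>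
     filterlim (Nder \<phi>) at_top at_top"

text \<open>Structural assumption: phi in C^1([0,oo)) and C^2((0,oo)), phi'(t) ~ t phi''(t).\<close>
definition structural :: "(real \<Rightarrow> real) \<Rightarrow> bool" where
  "structural \<phi> \<longleftrightarrow>
     continuous_on {0..} (Nder \<phi>) \<and>
     (\<forall>t>0. \<phi> differentiable (at t)) \<and>
     (\<forall>t>0. Nder \<phi> differentiable (at t)) \<and>
     continuous_on {0<..} (deriv (Nder \<phi>)) \<and>
     (\<exists>c1 c2. 0 < c1 \<and> 0 < c2 \<and>
        (\<forall>t>0. c1 * Nder \<phi> t \<le> t * deriv (Nder \<phi>) t \<and>
               t * deriv (Nder \<phi>) t \<le> c2 * Nder \<phi> t))"

definition conj_fn :: "(real \<Rightarrow> real) \<Rightarrow> real \<Rightarrow> real" where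
  "conj_fn \<phi> t = Sup {s * t - \<phi> s | s. 0 \<le> s}"

definition orlicz :: "(real \<Rightarrow> real) \<Rightarrow> 'a::euclidean_space set \<Rightarrow> ('a \<Rightarrow> 'b::real_normed_vector) \<Rightarrow> bool" where
  "orlicz \<phi> S f \<longleftrightarrow> set_borel_measurable lebesgue S f \<and>
     (\<exists>k>0. (\<integral>\<^sup>+x\<in>S. ennreal (\<phi> (norm (f x) / k)) \<partial>lebesgue) < \<infinity>)"

text \<open>Luxemburg norm of f_k on S tends to 0.\<close>
definition lux_tendsto_zero :: "(real \<Rightarrow> real) \<Rightarrow> 'a::euclidean_space set \<Rightarrow> (nat \<Rightarrow> 'a \<Rightarrow> 'b::real_normed_vector) \<Rightarrow> bool" where
  "lux_tendsto_zero \<phi> S f \<longleftrightarrow>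
     (\<forall>\<epsilon>>0. \<forall>\<^sub>F k in sequentially. (\<integral>\<^sup>+x\<in>S. ennreal (\<phi> (norm (f k x) / \<epsilon>)) \<partial>lebesgue) \<le> 1)"

fun Ck :: "nat \<Rightarrow> ('a::euclidean_space \<Rightarrow> real) \<Rightarrow> bool" where
  "Ck 0 f = continuous_on UNIV f"
| "Ck (Suc k) f = ((\<forall>x. f differentiable (at x)) \<and>
      (\<forall>i\<in>Basis. Ck k (\<lambda>x. frechet_derivative f (at x) i)))"

definition smooth :: "('a::euclidean_space \<Rightarrow> real) \<Rightarrow> bool" where
  "smooth f \<longleftrightarrow> (\<forall>k. Ck k f)"

definition test_fn :: "'a::euclidean_space set \<Rightarrow> ('a \<Rightarrow> real) \<Rightarrow> bool" where
  "test_fn S \<psi> \<longleftrightarrow> smooth \<psi> \<and> compact (closure {x. \<psi> x \<noteq> 0}) \<and> closure {x. \<psi> x \<noteq> 0} \<subseteq> S"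

definition grad :: "('a::euclidean_space \<Rightarrow> real) \<Rightarrow> 'a \<Rightarrow> 'a" where
  "grad \<psi> x = (\<Sum>i\<in>Basis. frechet_derivative \<psi> (at x) i *\<^sub>R i)"

definition weak_grad :: "'a::euclidean_space set \<Rightarrow> ('a \<Rightarrow> real) \<Rightarrow> ('a \<Rightarrow> 'a) \<Rightarrow> bool" where
  "weak_grad Om u g \<longleftrightarrow> (\<forall>\<psi>. test_fn Om \<psi> \<longrightarrow> (\<forall>i\<in>Basis.
     (LINT x:Om|lebesgue. u x * frechet_derivative \<psi> (at x) i) =
     - (LINT x:Om|lebesgue. (g x \<bullet> i) * \<psi> x)))"

text \<open>u belongs to W_0^{1,phi}(Om) with weak gradient g: closure of C_c^oo(Om)
  in the (Luxemburg) Orlicz--Sobolev norm.\<close>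
definition W0 :: "(real \<Rightarrow> real) \<Rightarrow> 'a::euclidean_space set \<Rightarrow> ('a \<Rightarrow> real) \<Rightarrow> ('a \<Rightarrow> 'a) \<Rightarrow> bool" where
  "W0 \<phi> Om u g \<longleftrightarrow> orlicz \<phi> Om u \<and> orlicz \<phi> Om g \<and> weak_grad Om u g \<and>
     (\<exists>\<psi>. (\<forall>k. test_fn Om (\<psi> k)) \<and>
        lux_tendsto_zero \<phi> Om (\<lambda>k x. \<psi> k x - u x) \<and>
        lux_tendsto_zero \<phi> Om (\<lambda>k x. grad (\<psi> k) x - g x))"

definition dt :: "(real \<times> 'a::euclidean_space \<Rightarrow> real) \<Rightarrow> real \<times> 'a \<Rightarrow> real" where
  "dt \<eta> z = frechet_derivative \<eta> (at z) (1, 0)"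

definition gradx :: "(real \<times> 'a::euclidean_space \<Rightarrow> real) \<Rightarrow> real \<times> 'a \<Rightarrow> 'a" where
  "gradx \<eta> z = (\<Sum>i\<in>Basis. frechet_derivative \<eta> (at z) (0, i) *\<^sub>R i)"

definition par_cyl :: "real \<Rightarrow> real \<Rightarrow> 'a::euclidean_space \<Rightarrow> real \<Rightarrow> (real \<times> 'a) set" where
  "par_cyl \<alpha> t1 x1 r = {z. \<bar>fst z - t1\<bar> < \<alpha> * r\<^sup>2 \<and> snd z \<in> ball x1 r}"

definition maxfn :: "real \<Rightarrow> (real \<times> 'a::euclidean_space \<Rightarrow> 'b::real_normed_vector) \<Rightarrow> real \<times> 'a \<Rightarrow> ennreal" where
  "maxfn \<alpha> g z = (SUP C \<in> {par_cyl \<alpha> t1 x1 r | t1 x1 r. 0 < r \<and> z \<in> par_cyl \<alpha> t1 x1 r}.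
       (\<integral>\<^sup>+y\<in>C. ennreal (norm (g y)) \<partial>lebesgue) / emeasure lebesgue C)"

end

theory Submission
  imports Defs
begin

text \<open>
  Put \<open>\<lambda>_j = 2^j \<gamma>\<close> for \<open>j = 1..m\<^sub>0\<close>. A Vitali covering argument for \<open>\<alpha>\<close>-parabolic
  cylinders gives the weak-type estimate \<open>s |{M\<^sup>\<alpha> h > s}| \<le> C_n \<integral>_{|h| > s/2} |h|\<close>.
  Applied with \<open>\<alpha> = \<lambda>_j / \<phi>'(\<lambda>_j)\<close> at level \<open>\<lambda>_j\<close> to \<open>\<nabla>w \<chi>_Q\<close> and at level \<open>\<phi>'(\<lambda>_j)\<close>
  to \<open>G \<chi>_Q\<close>, it bounds \<open>\<phi>(\<lambda>_j)\<close> times the two superlevel measures by integrals with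
  weights \<open>\<phi>(\<lambda>_j)/\<lambda>_j \<le> \<phi>'(\<lambda>_j)\<close> and \<open>\<phi>(\<lambda>_j)/\<phi>'(\<lambda>_j) \<le> \<lambda>_j\<close>. The structural assumption
  \<open>t \<phi>''(t) \<sim> \<phi>'(t)\<close> makes \<open>\<phi>'\<close> grow geometrically along dyadic levels, so, summed over
  \<open>j\<close>, these weights are dominated pointwise by \<open>\<phi>(|\<nabla>w|)\<close> and \<open>\<phi>\<^sup>*(|G|)\<close>. Hence the
  \<open>m\<^sub>0\<close> terms sum to at most \<open>c \<phi>(\<gamma>) |Q|\<close>, and the smallest is at most \<open>c \<phi>(\<gamma>) |Q| / m\<^sub>0\<close>.
\<close>

section \<open>Real-variable lemmas\<close>

lemma Nder_eqI:
  assumes "(f has_real_derivative D) (at t within {t..})"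
  shows "Nder f t = D"
  unfolding Nder_def
proof (rule the_equality)
  fix d assume "(f has_real_derivative d) (at t within {t..})"
  then have "((\<lambda>y. (f y - f t) / (y - t)) \<longlongrightarrow> d) (at_right t)"
    by (simp add: has_field_derivative_iff at_within_Ici_at_right)
  moreover have "((\<lambda>y. (f y - f t) / (y - t)) \<longlongrightarrow> D) (at_right t)"
    using assms by (simp add: has_field_derivative_iff at_within_Ici_at_right)
  ultimately show "d = D"
    using tendsto_unique[OF trivial_limit_at_right_real] by blast
qed (fact assms)

lemma elasticity_lower_bound_imp_growth:
  assumes t: "0 < t" "t \<le> s"
    and der: "\<And>x. t \<le> x \<Longrightarrow> x \<le> s \<Longrightarrow> (f has_real_derivative f' x) (at x)"
    and pos: "\<And>x. t \<le> x \<Longrightarrow> x \<le> s \<Longrightarrow> 0 < f x"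
    and elast: "\<And>x. t \<le> x \<Longrightarrow> x \<le> s \<Longrightarrow> c * f x \<le> x * f' x"
  shows "(s / t) powr c * f t \<le> f s"
proof -
  have "ln (f t) - c * ln t \<le> ln (f s) - c * ln s"
  proof (rule DERIV_nonneg_imp_nondecreasing[OF t(2)])
    fix x assume x: "t \<le> x" "x \<le> s"
    have "((\<lambda>x. ln (f x) - c * ln x) has_real_derivative f' x / f x - c / x) (at x)"
      using x t pos[OF x] by (auto intro!: derivative_eq_intros der[OF x] simp: field_simps)
    moreover have "0 \<le> f' x / f x - c / x"
      using elast[OF x] pos[OF x] x t by (simp add: field_simps)
    ultimately show "\<exists>y. ((\<lambda>x. ln (f x) - c * ln x) has_real_derivative y) (at x) \<and> 0 \<le> y"
      by blast
  qed
  then have "ln ((s / t) powr c * f t) \<le> ln (f s)"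
    using t pos[of t] by (simp add: ln_mult ln_powr ln_div right_diff_distrib)
  then show ?thesis
    using t pos[of t] pos[of s] by simp
qed

lemma elasticity_upper_bound_imp_growth:
  assumes t: "0 < t" "t \<le> s"
    and der: "\<And>x. t \<le> x \<Longrightarrow> x \<le> s \<Longrightarrow> (f has_real_derivative f' x) (at x)"
    and pos: "\<And>x. t \<le> x \<Longrightarrow> x \<le> s \<Longrightarrow> 0 < f x"
    and elast: "\<And>x. t \<le> x \<Longrightarrow> x \<le> s \<Longrightarrow> x * f' x \<le> c * f x"
  shows "f s \<le> (s / t) powr c * f t"
proof -
  have "ln (f s) - c * ln s \<le> ln (f t) - c * ln t"
  proof (rule DERIV_nonpos_imp_nonincreasing[OF t(2)])
    fix x assume x: "t \<le> x" "x \<le> s"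
    have "((\<lambda>x. ln (f x) - c * ln x) has_real_derivative f' x / f x - c / x) (at x)"
      using x t pos[OF x] by (auto intro!: derivative_eq_intros der[OF x] simp: field_simps)
    moreover have "f' x / f x - c / x \<le> 0"
      using elast[OF x] pos[OF x] x t by (simp add: field_simps)
    ultimately show "\<exists>y. ((\<lambda>x. ln (f x) - c * ln x) has_real_derivative y) (at x) \<and> y \<le> 0"
      by blast
  qed
  then have "ln (f s) \<le> ln ((s / t) powr c * f t)"
    using t pos[of t] by (simp add: ln_mult ln_powr ln_div right_diff_distrib)
  then show ?thesis
    using t pos[of t] pos[of s] by simp
qed

lemma sum_atMost_le_geometric_growth:
  fixes a :: "nat \<Rightarrow> real"
  assumes B: "1 < B" and nonneg: "\<And>j. 0 \<le> a j" and growth: "\<And>j. B * a j \<le> a (Suc j)"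
  shows "(\<Sum>j\<le>n. a j) \<le> B / (B - 1) * a n"
proof (induction n)
  case 0
  show ?case
    using B nonneg[of 0] by (simp add: field_simps)
next
  case (Suc n)
  have "a n \<le> a (Suc n) / B"
    using growth[of n] B by (simp add: field_simps mult.commute)
  then have "B / (B - 1) * a n \<le> B / (B - 1) * (a (Suc n) / B)"
    using B by (intro mult_left_mono) auto
  also have "\<dots> + a (Suc n) = B / (B - 1) * a (Suc n)"
    using B by (simp add: field_simps)
  finally show ?case
    using Suc.IH by simp
qed

lemma sum_le_geometric_growth:
  fixes a :: "nat \<Rightarrow> real"
  assumes B: "1 < B" and nonneg: "\<And>j. 0 \<le> a j" and growth: "\<And>j. B * a j \<le> a (Suc j)"
    and J: "finite J" "\<And>j. j \<in> J \<Longrightarrow> a j \<le> M" and M: "0 \<le> M"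
  shows "(\<Sum>j\<in>J. a j) \<le> B / (B - 1) * M"
proof (cases "J = {}")
  case True
  then show ?thesis
    using B M by simp
next
  case False
  then have "Max J \<in> J"
    using J(1) by simp
  have "(\<Sum>j\<in>J. a j) \<le> (\<Sum>j\<le>Max J. a j)"
    using J(1) nonneg by (intro sum_mono2) auto
  also have "\<dots> \<le> B / (B - 1) * a (Max J)"
    by (rule sum_atMost_le_geometric_growth[where a = a, OF B nonneg growth])
  also have "\<dots> \<le> B / (B - 1) * M"
    using B J(2)[OF \<open>Max J \<in> J\<close>] by (intro mult_left_mono) auto
  finally show ?thesis .
qed

lemma doubling_imp_dilation_bound:
  fixes f :: "real \<Rightarrow> real"
  assumes mono: "\<And>s t. 0 \<le> s \<Longrightarrow> s \<le> t \<Longrightarrow> f s \<le> f t"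
    and D: "0 < D" and doubling: "\<And>t. 0 \<le> t \<Longrightarrow> f (2 * t) \<le> D * f t" and k: "0 < k"
  obtains C where "0 < C" "\<And>a. 0 \<le> a \<Longrightarrow> f a \<le> C * f (a / k)"
proof -
  have iterate: "f (2 ^ N * t) \<le> D ^ N * f t" if "0 \<le> t" for N t
  proof (induction N)
    case (Suc N)
    have "f (2 ^ Suc N * t) \<le> D * f (2 ^ N * t)"
      using doubling[of "2 ^ N * t"] that by (simp add: mult.assoc)
    also have "\<dots> \<le> D * (D ^ N * f t)"
      using Suc.IH D by (intro mult_left_mono) auto
    finally show ?case
      by simp
  qed simp
  obtain N :: nat where N: "k < 2 ^ N"
    using real_arch_pow[of 2 k] by auto
  have "f a \<le> D ^ N * f (a / k)" if "0 \<le> a" for a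
  proof -
    have "a \<le> 2 ^ N * (a / k)"
      using that N k by (simp add: field_simps mult_left_mono)
    then have "f a \<le> f (2 ^ N * (a / k))"
      using that by (intro mono) auto
    also have "\<dots> \<le> D ^ N * f (a / k)"
      using that k by (intro iterate) auto
    finally show ?thesis .
  qed
  then show ?thesis
    using D by (intro that[of "D ^ N"]) auto
qed

section \<open>Measure-theoretic lemmas\<close>

lemma finite_Vitali_covering:
  fixes C E :: "'i \<Rightarrow> 'a set" and r :: "'i \<Rightarrow> 'b::linorder"
  assumes "finite F"
    and "\<And>i. i \<in> F \<Longrightarrow> C i \<noteq> {}"
    and "\<And>i j. i \<in> F \<Longrightarrow> j \<in> F \<Longrightarrow> r i \<le> r j \<Longrightarrow> C i \<inter> C j \<noteq> {} \<Longrightarrow> C i \<subseteq> E j"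
  shows "\<exists>S\<subseteq>F. disjoint_family_on C S \<and> (\<Union>i\<in>F. C i) \<subseteq> (\<Union>i\<in>S. E i)"
  using assms
proof (induction "card F" arbitrary: F rule: less_induct)
  case less
  show ?case
  proof (cases "F = {}")
    case True
    then show ?thesis by (auto simp: disjoint_family_on_def)
  next
    case False
    have "Max (r ` F) \<in> r ` F"
      using less.prems(1) False by (intro Max_in) auto
    then obtain i0 where i0: "i0 \<in> F" "r i0 = Max (r ` F)"
      by auto
    have i0_max: "r i \<le> r i0" if "i \<in> F" for i
      using i0(2) less.prems(1) that by simp
    define F' where "F' = {i\<in>F. C i \<inter> C i0 = {}}"
    have "F' \<subset> F"
      using i0(1) less.prems(2) unfolding F'_def by auto
    then have "card F' < card F"
      using less.prems(1) by (simp add: psubset_card_mono)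
    then obtain S' where S': "S' \<subseteq> F'" "disjoint_family_on C S'" "(\<Union>i\<in>F'. C i) \<subseteq> (\<Union>i\<in>S'. E i)"
      using less.hyps[of F'] less.prems \<open>F' \<subset> F\<close> by (meson finite_subset psubset_imp_subset subsetD)
    have "(\<Union>i\<in>F. C i) \<subseteq> (\<Union>i\<in>insert i0 S'. E i)"
    proof
      fix y assume "y \<in> (\<Union>i\<in>F. C i)"
      then obtain i where i: "i \<in> F" "y \<in> C i" by auto
      show "y \<in> (\<Union>i\<in>insert i0 S'. E i)"
      proof (cases "i \<in> F'")
        case True
        then show ?thesis using S'(3) i by auto
      next
        case False
        then have "C i \<subseteq> E i0"
          using less.prems(3) i(1) i0(1) i0_max[OF i(1)] unfolding F'_def by blast
        then show ?thesis using i by auto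
      qed
    qed
    moreover have "disjoint_family_on C (insert i0 S')"
      using S'(1,2) unfolding disjoint_family_on_def F'_def by blast
    ultimately show ?thesis
      using S'(1) i0(1) unfolding F'_def by (intro exI[of _ "insert i0 S'"]) auto
  qed
qed

lemma emeasure_lebesgue_inner_regular:
  fixes E :: "'a::euclidean_space set"
  assumes E: "E \<in> sets lebesgue"
  shows "emeasure lebesgue E = (SUP K \<in> {K. compact K \<and> K \<subseteq> E}. emeasure lebesgue K)"
    (is "_ = ?S")
proof (rule antisym)
  define E\<^sub>n where "E\<^sub>n n = E \<inter> ball 0 (real n)" for n
  have E\<^sub>n_sets: "E\<^sub>n n \<in> sets lebesgue" for n
    using E unfolding E\<^sub>n_def by auto
  have "emeasure lebesgue (E\<^sub>n n) \<le> ?S" for n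
  proof (rule ennreal_le_epsilon)
    fix e :: real assume "0 < e"
    then obtain T where T: "closed T" "T \<subseteq> E\<^sub>n n" "E\<^sub>n n - T \<in> lmeasurable"
      "emeasure lebesgue (E\<^sub>n n - T) < ennreal e"
      using sets_lebesgue_inner_closed[OF E\<^sub>n_sets] by metis
    have "compact T"
      using T(1,2) bounded_subset[of "ball 0 (real n)" T] unfolding E\<^sub>n_def
      by (auto simp: compact_eq_bounded_closed)
    have "emeasure lebesgue (E\<^sub>n n) \<le> emeasure lebesgue T + emeasure lebesgue (E\<^sub>n n - T)"
      using T(1,2,3) emeasure_subadditive[of T lebesgue "E\<^sub>n n - T"]
      by (simp add: Un_absorb1 borel_closed fmeasurableD)
    also have "\<dots> \<le> ?S + ennreal e"
      using T(2,4) \<open>compact T\<close> unfolding E\<^sub>n_def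
      by (intro add_mono SUP_upper) auto
    finally show "emeasure lebesgue (E\<^sub>n n) \<le> ?S + ennreal e" .
  qed
  moreover have "emeasure lebesgue E = (SUP n. emeasure lebesgue (E\<^sub>n n))"
  proof -
    have U: "(\<Union>n. E\<^sub>n n) = E"
      unfolding E\<^sub>n_def by (auto simp: real_arch_simple dist_real_def) (meson reals_Archimedean2)
    moreover have "incseq E\<^sub>n"
      unfolding E\<^sub>n_def incseq_def by (auto simp: subset_eq)
    then have "(SUP n. emeasure lebesgue (E\<^sub>n n)) = emeasure lebesgue (\<Union>n. E\<^sub>n n)"
      using E\<^sub>n_sets by (intro SUP_emeasure_incseq) auto
    then show ?thesis
      unfolding U ..
  qed
  ultimately show "emeasure lebesgue E \<le> ?S"
    by (simp add: SUP_least)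
  show "?S \<le> emeasure lebesgue E"
    using E by (intro SUP_least emeasure_mono) (auto simp: borel_compact)
qed

lemma ennreal_less_divide_iff:
  assumes "0 < \<mu>" "0 \<le> s"
  shows "ennreal s < I / ennreal \<mu> \<longleftrightarrow> ennreal s * ennreal \<mu> < I"
proof (cases I)
  case (real i)
  then show ?thesis
    using assms by (simp add: divide_ennreal ennreal_mult'[symmetric] ennreal_less_iff pos_less_divide_eq)
next
  case top
  then show ?thesis
    using assms by (simp add: ennreal_top_divide ennreal_mult'[symmetric])
qed

lemma ennreal_le_divide_of_mult_le:
  assumes a: "0 < a" and le: "ennreal a * X \<le> ennreal T"
  shows "X \<le> ennreal (T / a)"
proof (cases "0 \<le> T")
  case True
  have "X = ennreal a * X / ennreal a"
    using a by (simp add: mult.commute mult_divide_eq_ennreal)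
  also have "\<dots> \<le> ennreal T / ennreal a"
    by (rule divide_right_mono_ennreal[OF le])
  also have "\<dots> = ennreal (T / a)"
    using True a by (rule divide_ennreal)
  finally show ?thesis .
next
  case False
  then have "ennreal a * X = 0"
    using le by (simp add: ennreal_neg)
  then show ?thesis
    using a by simp
qed

lemma ex_card_mult_le_sum:
  fixes V :: "'i \<Rightarrow> 'a::{linorder, ordered_comm_monoid_add, semiring_1}"
  assumes "finite I" "I \<noteq> {}"
  obtains i where "i \<in> I" "of_nat (card I) * V i \<le> (\<Sum>j\<in>I. V j)"
proof -
  have "Min (V ` I) \<in> V ` I"
    using assms by (intro Min_in) auto
  then obtain i where i: "i \<in> I" "V i = Min (V ` I)"
    by auto
  have "of_nat (card I) * V i = (\<Sum>j\<in>I. V i)"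
    by simp
  also have "\<dots> \<le> (\<Sum>j\<in>I. V j)"
    using i assms(1) by (intro sum_mono) simp
  finally show ?thesis
    using that i(1) by blast
qed

lemma nn_set_integral_tail_gt:
  fixes h :: "'a \<Rightarrow> 'b::real_normed_vector"
  assumes h: "h \<in> borel_measurable M" and P: "P \<in> sets M" "emeasure M P < \<infinity>" and s: "0 < s"
    and gt: "ennreal s * emeasure M P < (\<integral>\<^sup>+y\<in>P. ennreal (norm (h y)) \<partial>M)"
  shows "ennreal (s / 2) * emeasure M P <
    (\<integral>\<^sup>+y\<in>P. ennreal (if s / 2 < norm (h y) then norm (h y) else 0) \<partial>M)"
    (is "?m < ?tail")
proof -
  have "(\<integral>\<^sup>+y\<in>P. ennreal (norm (h y)) \<partial>M) \<le>
      (\<integral>\<^sup>+y. ennreal (if s / 2 < norm (h y) then norm (h y) else 0) * indicator P y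
        + ennreal (s / 2) * indicator P y \<partial>M)"
    by (intro nn_integral_mono) (auto simp: indicator_def intro!: ennreal_leI)
  also have "\<dots> = ?tail + ?m"
    using h P(1) by (simp add: nn_integral_add nn_integral_cmult_indicator)
  finally have "?m + ?m < ?m + ?tail"
    using gt s by (simp add: ennreal_mult'[symmetric] ennreal_plus[symmetric] distrib_right[symmetric]
        add.commute del: ennreal_plus)
  moreover have "?m \<noteq> \<infinity>"
    using P(2) by (simp add: ennreal_mult_eq_top_iff)
  ultimately show ?thesis
    by (meson ennreal_add_left_cancel_less)
qed

lemma sum_nn_set_integral_disjoint_le:
  assumes S: "finite S" "disjoint_family_on C S" and C: "\<And>i. i \<in> S \<Longrightarrow> C i \<in> sets M"
    and u: "u \<in> borel_measurable M"
  shows "(\<Sum>i\<in>S. \<integral>\<^sup>+x\<in>C i. u x \<partial>M) \<le> (\<integral>\<^sup>+x. u x \<partial>M)"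
proof -
  have "(\<Sum>i\<in>S. \<integral>\<^sup>+x\<in>C i. u x \<partial>M) = (\<integral>\<^sup>+x. u x * (\<Sum>i\<in>S. indicator (C i) x) \<partial>M)"
    using S(1) C u by (simp add: nn_integral_sum[symmetric] sum_distrib_left)
  also have "\<dots> \<le> (\<integral>\<^sup>+x. u x \<partial>M)"
  proof (rule nn_integral_mono)
    fix x
    have "(\<Sum>i\<in>S. indicator (C i) x) = (indicator (\<Union>i\<in>S. C i) x :: ennreal)"
      by (metis indicator_UN_disjoint[OF S])
    then show "u x * (\<Sum>i\<in>S. indicator (C i) x) \<le> u x"
      by (simp add: indicator_def)
  qed
  finally show ?thesis .
qed

lemma ennreal_mult_le_nn_integral_scale:
  assumes c: "0 \<le> c" and h: "h \<in> borel_measurable M" "\<And>z. 0 \<le> h z"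
    and le: "ennreal s * X \<le> ennreal K * (\<integral>\<^sup>+z. ennreal (h z) \<partial>M)"
  shows "ennreal (c * s) * X \<le> ennreal K * (\<integral>\<^sup>+z. ennreal (c * h z) \<partial>M)"
proof -
  have "ennreal (c * s) * X = ennreal c * (ennreal s * X)"
    using c by (simp add: ennreal_mult' mult.assoc)
  also have "\<dots> \<le> ennreal c * (ennreal K * (\<integral>\<^sup>+z. ennreal (h z) \<partial>M))"
    by (rule mult_left_mono[OF le]) simp
  also have "\<dots> = ennreal K * (\<integral>\<^sup>+z. ennreal c * ennreal (h z) \<partial>M)"
    using h(1) by (simp add: nn_integral_cmult mult.left_commute)
  also have "\<dots> = ennreal K * (\<integral>\<^sup>+z. ennreal (c * h z) \<partial>M)"
    using c by (simp add: ennreal_mult')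
  finally show ?thesis .
qed

lemma borel_measurable_orlicz_modular:
  fixes \<psi> :: "real \<Rightarrow> real" and F :: "'a::euclidean_space \<Rightarrow> 'b::real_normed_vector"
  assumes F: "orlicz \<psi> S F" and mono: "\<And>s t. 0 \<le> s \<Longrightarrow> s \<le> t \<Longrightarrow> \<psi> s \<le> \<psi> t"
    and zero: "\<psi> 0 = 0" and c: "0 \<le> c"
  shows "(\<lambda>z. indicator S z * \<psi> (norm (F z) / c)) \<in> borel_measurable lebesgue"
proof -
  have "(\<lambda>x. \<psi> (max 0 x)) \<in> borel_measurable borel"
    by (rule borel_measurable_mono) (auto simp: mono_def intro: mono)
  moreover have "(\<lambda>z. indicator S z *\<^sub>R F z) \<in> borel_measurable lebesgue"
    using F unfolding orlicz_def set_borel_measurable_def by simp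
  ultimately have "(\<lambda>z. \<psi> (max 0 (norm (indicator S z *\<^sub>R F z) / c))) \<in> borel_measurable lebesgue"
    by measurable
  moreover have "(\<lambda>z. \<psi> (max 0 (norm (indicator S z *\<^sub>R F z) / c))) = (\<lambda>z. indicator S z * \<psi> (norm (F z) / c))"
    using c by (auto simp: indicator_def zero fun_eq_iff)
  ultimately show ?thesis
    by simp
qed

lemma integrable_orlicz_doubling:
  fixes \<psi> :: "real \<Rightarrow> real" and F :: "'a::euclidean_space \<Rightarrow> 'b::real_normed_vector"
  assumes F: "orlicz \<psi> S F"
    and mono: "\<And>s t. 0 \<le> s \<Longrightarrow> s \<le> t \<Longrightarrow> \<psi> s \<le> \<psi> t" and zero: "\<psi> 0 = 0"
    and D: "0 < D" and doubling: "\<And>t. 0 \<le> t \<Longrightarrow> \<psi> (2 * t) \<le> D * \<psi> t"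
  shows "integrable lebesgue (\<lambda>z. indicator S z * \<psi> (norm (F z)))"
proof (rule integrableI_nonneg)
  have nonneg: "0 \<le> \<psi> t" if "0 \<le> t" for t
    using mono[OF order_refl that] zero by simp
  note meas = borel_measurable_orlicz_modular[OF F mono zero]
  show "(\<lambda>z. indicator S z * \<psi> (norm (F z))) \<in> borel_measurable lebesgue"
    using meas[of 1] by simp
  show "AE z in lebesgue. 0 \<le> indicator S z * \<psi> (norm (F z))"
    by (simp add: nonneg)
  obtain k where k: "0 < k" and finite: "(\<integral>\<^sup>+z\<in>S. ennreal (\<psi> (norm (F z) / k)) \<partial>lebesgue) < \<infinity>"
    using F unfolding orlicz_def by blast
  obtain C where C: "0 < C" "\<And>a. 0 \<le> a \<Longrightarrow> \<psi> a \<le> C * \<psi> (a / k)"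
    using doubling_imp_dilation_bound[where f = \<psi>, OF mono D doubling k] by blast
  have "(\<integral>\<^sup>+z. ennreal (indicator S z * \<psi> (norm (F z))) \<partial>lebesgue) \<le>
      (\<integral>\<^sup>+z. ennreal C * (ennreal (\<psi> (norm (F z) / k)) * indicator S z) \<partial>lebesgue)"
    using C k nonneg by (intro nn_integral_mono) (auto simp: indicator_def ennreal_mult[symmetric] intro!: ennreal_leI)
  also have "\<dots> = ennreal C * (\<integral>\<^sup>+z\<in>S. ennreal (\<psi> (norm (F z) / k)) \<partial>lebesgue)"
  proof (rule nn_integral_cmult)
    have "(\<lambda>z. \<psi> (norm (F z) / k) * indicator S z) \<in> borel_measurable lebesgue"
      using meas[of k] k by (simp add: mult.commute)
    then have "(\<lambda>z. ennreal (\<psi> (norm (F z) / k) * indicator S z)) \<in> borel_measurable lebesgue"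
      by measurable
    then show "(\<lambda>z. ennreal (\<psi> (norm (F z) / k)) * indicator S z) \<in> borel_measurable lebesgue"
      by (simp add: indicator_mult_ennreal mult.commute)
  qed
  also have "\<dots> < \<infinity>"
    using finite by (simp add: ennreal_mult_less_top)
  finally show "(\<integral>\<^sup>+z. ennreal (indicator S z * \<psi> (norm (F z))) \<partial>lebesgue) < \<infinity>" .
qed

section \<open>Parabolic cylinders and the weak-type estimate\<close>

lemma par_cyl_eq_Times: "par_cyl \<alpha> t x r = {t - \<alpha> * r\<^sup>2<..<t + \<alpha> * r\<^sup>2} \<times> ball x r"
  by (auto simp: par_cyl_def abs_less_iff)

lemma open_par_cyl: "open (par_cyl \<alpha> t x r)"
  unfolding par_cyl_eq_Times by (intro open_Times) auto

lemma par_cyl_in_sets_lebesgue: "par_cyl \<alpha> t x r \<in> sets lebesgue"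
  using open_par_cyl[of \<alpha> t x r] by (simp add: borel_open)

lemma emeasure_par_cyl:
  fixes x :: "'n::euclidean_space"
  assumes "0 < \<alpha>" "0 < r"
  shows "emeasure lebesgue (par_cyl \<alpha> t x r) =
    ennreal (2 * \<alpha> * r ^ (DIM('n) + 2) * measure lborel (ball (0::'n) 1))"
proof -
  have "par_cyl \<alpha> t x r \<in> sets lborel"
    using open_par_cyl[of \<alpha> t x r] by (simp add: borel_open)
  then have "emeasure lebesgue (par_cyl \<alpha> t x r) = emeasure lborel (par_cyl \<alpha> t x r)"
    by simp
  also have "\<dots> = emeasure (lborel \<Otimes>\<^sub>M lborel) (par_cyl \<alpha> t x r)"
    by (simp add: lborel_prod)
  also have "\<dots> = emeasure lborel {t - \<alpha> * r\<^sup>2<..<t + \<alpha> * r\<^sup>2} * emeasure lborel (ball x r)"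
    unfolding par_cyl_eq_Times by (intro lborel.emeasure_pair_measure_Times) auto
  also have "emeasure lborel {t - \<alpha> * r\<^sup>2<..<t + \<alpha> * r\<^sup>2} = ennreal (2 * \<alpha> * r\<^sup>2)"
    using assms by (simp add: emeasure_lborel_Ioo)
  also have "emeasure lborel (ball x r) = ennreal (measure lborel (ball x r))"
    using emeasure_lborel_ball_finite[of x r] by (intro emeasure_eq_ennreal_measure) simp
  also have "measure lborel (ball x r) = r ^ DIM('n) * measure lborel (ball (0::'n) 1)"
    using assms(2) by (intro content_ball_conv_unit_ball) simp
  also have "ennreal (2 * \<alpha> * r\<^sup>2) * ennreal (r ^ DIM('n) * measure lborel (ball (0::'n) 1)) =
      ennreal (2 * \<alpha> * r\<^sup>2 * (r ^ DIM('n) * measure lborel (ball (0::'n) 1)))"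
    using assms by (intro ennreal_mult'[symmetric]) simp
  also have "2 * \<alpha> * r\<^sup>2 * (r ^ DIM('n) * measure lborel (ball (0::'n) 1)) =
      2 * \<alpha> * r ^ (DIM('n) + 2) * measure lborel (ball (0::'n) 1)"
    unfolding power_add by (simp only: mult_ac)
  finally show ?thesis .
qed

lemma emeasure_par_cyl_eq_ennreal:
  fixes x :: "'n::euclidean_space"
  assumes "0 < \<alpha>" "0 < r"
  obtains \<mu> where "0 < \<mu>" "emeasure lebesgue (par_cyl \<alpha> t x r) = ennreal \<mu>"
  using assms content_ball_pos[of 1 "0::'n"] by (intro that[OF _ emeasure_par_cyl[OF assms]]) simp

lemma emeasure_par_cyl_triple:
  fixes x :: "'n::euclidean_space"
  assumes "0 < \<alpha>" "0 < r"
  shows "emeasure lebesgue (par_cyl \<alpha> t x (3 * r)) =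
    ennreal (3 ^ (DIM('n) + 2)) * emeasure lebesgue (par_cyl \<alpha> t x r)"
proof -
  have r3: "0 < 3 * r"
    using assms(2) by simp
  have scale: "2 * \<alpha> * (3 * r) ^ (DIM('n) + 2) * measure lborel (ball (0::'n) 1) =
      3 ^ (DIM('n) + 2) * (2 * \<alpha> * r ^ (DIM('n) + 2) * measure lborel (ball (0::'n) 1))"
    by (simp only: power_mult_distrib mult_ac)
  show ?thesis
    unfolding emeasure_par_cyl[OF assms(1) r3] emeasure_par_cyl[OF assms] scale
    by (rule ennreal_mult') simp
qed

lemma par_cyl_subset_triple:
  fixes x x0 :: "'n::euclidean_space"
  assumes "0 < \<alpha>" "r \<le> r0" "par_cyl \<alpha> t x r \<inter> par_cyl \<alpha> t0 x0 r0 \<noteq> {}"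
  shows "par_cyl \<alpha> t x r \<subseteq> par_cyl \<alpha> t0 x0 (3 * r0)"
proof
  obtain z where z: "z \<in> par_cyl \<alpha> t x r" "z \<in> par_cyl \<alpha> t0 x0 r0"
    using assms(3) by blast
  fix y assume y: "y \<in> par_cyl \<alpha> t x r"
  have "dist x (snd z) < r"
    using z(1) by (simp add: par_cyl_def)
  then have "0 \<le> r"
    using zero_le_dist[of x "snd z"] by linarith
  then have "\<alpha> * r\<^sup>2 \<le> \<alpha> * r0\<^sup>2"
    using assms by (simp add: power_mono)
  moreover have "\<bar>fst y - t\<bar> < \<alpha> * r\<^sup>2" "\<bar>fst z - t\<bar> < \<alpha> * r\<^sup>2" "\<bar>fst z - t0\<bar> < \<alpha> * r0\<^sup>2"
    using y z by (auto simp: par_cyl_def)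
  moreover have "\<alpha> * (3 * r0)\<^sup>2 = 9 * (\<alpha> * r0\<^sup>2)" "0 \<le> \<alpha> * r0\<^sup>2"
    using assms(1) by (auto simp: power2_eq_square)
  ultimately have "\<bar>fst y - t0\<bar> < \<alpha> * (3 * r0)\<^sup>2"
    by linarith
  moreover have "dist x (snd y) < r" "dist x (snd z) < r" "dist x0 (snd z) < r0"
    using y z by (auto simp: par_cyl_def)
  then have "dist x0 (snd y) < 3 * r0"
    using assms(2) by (smt (verit) dist_commute dist_triangle)
  ultimately show "y \<in> par_cyl \<alpha> t0 x0 (3 * r0)"
    by (simp add: par_cyl_def)
qed

lemma par_cyl_Vitali_subcover:
  fixes F :: "(real \<times> 'n::euclidean_space \<times> real) set"
  assumes \<alpha>: "0 < \<alpha>" and F: "finite F" "\<And>t x r. (t, x, r) \<in> F \<Longrightarrow> 0 < r"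
  shows "\<exists>S\<subseteq>F. disjoint_family_on (\<lambda>(t, x, r). par_cyl \<alpha> t x r) S \<and>
    (\<Union>(t, x, r)\<in>F. par_cyl \<alpha> t x r) \<subseteq> (\<Union>(t, x, r)\<in>S. par_cyl \<alpha> t x (3 * r))"
proof (rule finite_Vitali_covering[where r = "\<lambda>(t, x, r). r", OF F(1)])
  fix i assume "i \<in> F"
  obtain t x r where i: "i = (t, x, r)"
    by (cases i)
  then have "0 < r"
    using F(2) \<open>i \<in> F\<close> by blast
  then have "(t, x) \<in> par_cyl \<alpha> t x r"
    using \<alpha> by (simp add: par_cyl_def)
  then show "(\<lambda>(t, x, r). par_cyl \<alpha> t x r) i \<noteq> {}"
    unfolding i by auto
next
  fix i j assume ij: "(\<lambda>(t, x, r). r) i \<le> (\<lambda>(t, x, r). r) j"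
    "(\<lambda>(t, x, r). par_cyl \<alpha> t x r) i \<inter> (\<lambda>(t, x, r). par_cyl \<alpha> t x r) j \<noteq> {}"
  obtain t x r t' x' r' where "i = (t, x, r)" "j = (t', x', r')"
    by (cases i, cases j)
  then show "(\<lambda>(t, x, r). par_cyl \<alpha> t x r) i \<subseteq> (\<lambda>(t, x, r). par_cyl \<alpha> t x (3 * r)) j"
    using ij par_cyl_subset_triple[OF \<alpha>] by simp
qed

lemma maxfn_gt_iff:
  fixes g :: "real \<times> 'n::euclidean_space \<Rightarrow> 'b::real_normed_vector"
  assumes "0 < \<alpha>" "0 \<le> s"
  shows "ennreal s < maxfn \<alpha> g z \<longleftrightarrow>
    (\<exists>t x r. 0 < r \<and> z \<in> par_cyl \<alpha> t x r \<and>
       ennreal s * emeasure lebesgue (par_cyl \<alpha> t x r) < (\<integral>\<^sup>+y\<in>par_cyl \<alpha> t x r. norm (g y) \<partial>lebesgue))"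
proof -
  have average_gt_iff:
    "ennreal s < (\<integral>\<^sup>+y\<in>par_cyl \<alpha> t x r. norm (g y) \<partial>lebesgue) / emeasure lebesgue (par_cyl \<alpha> t x r)
    \<longleftrightarrow> ennreal s * emeasure lebesgue (par_cyl \<alpha> t x r) < (\<integral>\<^sup>+y\<in>par_cyl \<alpha> t x r. norm (g y) \<partial>lebesgue)"
    if r: "0 < r" for t x r
  proof -
    obtain \<mu> where "0 < \<mu>" "emeasure lebesgue (par_cyl \<alpha> t x r) = ennreal \<mu>"
      by (rule emeasure_par_cyl_eq_ennreal[OF assms(1) r])
    then show ?thesis
      using ennreal_less_divide_iff[OF _ assms(2)] by simp
  qed
  have "ennreal s < maxfn \<alpha> g z \<longleftrightarrow> (\<exists>t x r. 0 < r \<and> z \<in> par_cyl \<alpha> t x r \<and>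
       ennreal s < (\<integral>\<^sup>+y\<in>par_cyl \<alpha> t x r. norm (g y) \<partial>lebesgue) / emeasure lebesgue (par_cyl \<alpha> t x r))"
    unfolding maxfn_def less_SUP_iff by force
  also have "\<dots> \<longleftrightarrow> (\<exists>t x r. 0 < r \<and> z \<in> par_cyl \<alpha> t x r \<and>
       ennreal s * emeasure lebesgue (par_cyl \<alpha> t x r) < (\<integral>\<^sup>+y\<in>par_cyl \<alpha> t x r. norm (g y) \<partial>lebesgue))"
    by (intro iff_exI conj_cong refl) (rule average_gt_iff)
  finally show ?thesis .
qed

lemma emeasure_le_of_par_cyl_cover:
  fixes u :: "real \<times> 'n::euclidean_space \<Rightarrow> ennreal" and c :: ennreal
  assumes u: "u \<in> borel_measurable lebesgue" and \<alpha>: "0 < \<alpha>" and K: "compact K"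
    and cover: "K \<subseteq> (\<Union>(t, x, r)\<in>\<A>. par_cyl \<alpha> t x r)"
    and good: "\<And>t x r. (t, x, r) \<in> \<A> \<Longrightarrow>
      0 < r \<and> c * emeasure lebesgue (par_cyl \<alpha> t x r) \<le> (\<integral>\<^sup>+y\<in>par_cyl \<alpha> t x r. u y \<partial>lebesgue)"
  shows "c * emeasure lebesgue K \<le> ennreal (3 ^ (DIM('n) + 2)) * (\<integral>\<^sup>+y. u y \<partial>lebesgue)"
proof -
  define C :: "real \<times> 'n \<times> real \<Rightarrow> (real \<times> 'n) set"
    where "C = (\<lambda>(t, x, r). par_cyl \<alpha> t x r)"
  define C3 :: "real \<times> 'n \<times> real \<Rightarrow> (real \<times> 'n) set"
    where "C3 = (\<lambda>(t, x, r). par_cyl \<alpha> t x (3 * r))"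
  have C_sets: "C i \<in> sets lebesgue" "C3 i \<in> sets lebesgue" for i
    unfolding C_def C3_def by (simp_all add: par_cyl_in_sets_lebesgue split: prod.splits)
  have C_open: "open (C i)" for i
    unfolding C_def by (simp add: open_par_cyl split: prod.splits)
  have "K \<subseteq> (\<Union>i\<in>\<A>. C i)"
    using cover unfolding C_def .
  then obtain F where F: "F \<subseteq> \<A>" "finite F" "K \<subseteq> (\<Union>i\<in>F. C i)"
    by (rule compactE_image[OF K C_open])
  have "\<And>t x r. (t, x, r) \<in> F \<Longrightarrow> 0 < r"
    using F(1) good by blast
  then obtain S where S: "S \<subseteq> F" "disjoint_family_on C S" "(\<Union>i\<in>F. C i) \<subseteq> (\<Union>i\<in>S. C3 i)"
    using par_cyl_Vitali_subcover[OF \<alpha> F(2)] unfolding C_def C3_def by blast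
  have "finite S"
    using S(1) F(2) finite_subset by blast
  have C3_emeasure: "emeasure lebesgue (C3 i) = ennreal (3 ^ (DIM('n) + 2)) * emeasure lebesgue (C i)"
    if "i \<in> S" for i
  proof -
    obtain t x r where i: "i = (t, x, r)"
      by (cases i)
    then have "0 < r"
      using that S(1) F(1) good by blast
    then show ?thesis
      unfolding i C_def C3_def prod.case by (rule emeasure_par_cyl_triple[OF \<alpha>])
  qed
  have "emeasure lebesgue K \<le> (\<Sum>i\<in>S. emeasure lebesgue (C3 i))"
    using F(3) S(3) \<open>finite S\<close> C_sets
    by (intro order_trans[OF emeasure_mono emeasure_subadditive_finite]) auto
  also have "\<dots> = ennreal (3 ^ (DIM('n) + 2)) * (\<Sum>i\<in>S. emeasure lebesgue (C i))"
    by (simp add: C3_emeasure sum_distrib_left)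
  finally have "c * emeasure lebesgue K \<le> c * (ennreal (3 ^ (DIM('n) + 2)) * (\<Sum>i\<in>S. emeasure lebesgue (C i)))"
    by (rule mult_left_mono) simp
  also have "\<dots> = ennreal (3 ^ (DIM('n) + 2)) * (\<Sum>i\<in>S. c * emeasure lebesgue (C i))"
    by (simp add: sum_distrib_left mult.left_commute)
  also have "(\<Sum>i\<in>S. c * emeasure lebesgue (C i)) \<le> (\<Sum>i\<in>S. \<integral>\<^sup>+y\<in>C i. u y \<partial>lebesgue)"
    using S(1) F(1) good unfolding C_def by (intro sum_mono) (auto split: prod.splits)
  also have "\<dots> \<le> (\<integral>\<^sup>+y. u y \<partial>lebesgue)"
    by (rule sum_nn_set_integral_disjoint_le[OF \<open>finite S\<close> S(2) C_sets(1) u])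
  finally show ?thesis
    by (simp add: mult_left_mono)
qed

lemma emeasure_maxfn_gt_le:
  fixes h :: "real \<times> 'n::euclidean_space \<Rightarrow> 'b::real_normed_vector"
  assumes h: "h \<in> borel_measurable lebesgue" and \<alpha>: "0 < \<alpha>" and s: "0 < s"
  shows "ennreal s * emeasure lebesgue {z. ennreal s < maxfn \<alpha> h z} \<le>
    ennreal (2 * 3 ^ (DIM('n) + 2)) *
      (\<integral>\<^sup>+z. ennreal (if s / 2 < norm (h z) then norm (h z) else 0) \<partial>lebesgue)"
proof -
  define u where "u z = ennreal (if s / 2 < norm (h z) then norm (h z) else 0)" for z
  define \<A> where "\<A> = {(t, x, r). 0 < r \<and>
    ennreal s * emeasure lebesgue (par_cyl \<alpha> t x r) < (\<integral>\<^sup>+y\<in>par_cyl \<alpha> t x r. ennreal (norm (h y)) \<partial>lebesgue)}"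
  define E where "E = {z. ennreal s < maxfn \<alpha> h z}"
  have E_eq: "E = (\<Union>(t, x, r)\<in>\<A>. par_cyl \<alpha> t x r)"
    unfolding E_def \<A>_def using maxfn_gt_iff[OF \<alpha>, of s h] s by auto
  then have "open E"
    by (auto intro!: open_UN open_par_cyl split: prod.splits)
  then have "E \<in> sets lebesgue"
    by (simp add: borel_open)
  have u: "u \<in> borel_measurable lebesgue"
    unfolding u_def using h by measurable
  have "ennreal (s / 2) * emeasure lebesgue K \<le> ennreal (3 ^ (DIM('n) + 2)) * (\<integral>\<^sup>+y. u y \<partial>lebesgue)"
    if "compact K" "K \<subseteq> E" for K
  proof (rule emeasure_le_of_par_cyl_cover[OF u \<alpha> that(1)])
    show "K \<subseteq> (\<Union>(t, x, r)\<in>\<A>. par_cyl \<alpha> t x r)"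
      using that(2) E_eq by simp
    fix t x r assume "(t, x, r) \<in> \<A>"
    then have r: "0 < r" and gt: "ennreal s * emeasure lebesgue (par_cyl \<alpha> t x r) <
        (\<integral>\<^sup>+y\<in>par_cyl \<alpha> t x r. ennreal (norm (h y)) \<partial>lebesgue)"
      unfolding \<A>_def by auto
    obtain \<mu> where "emeasure lebesgue (par_cyl \<alpha> t x r) = ennreal \<mu>"
      using emeasure_par_cyl_eq_ennreal[OF \<alpha> r] by blast
    then have "emeasure lebesgue (par_cyl \<alpha> t x r) < \<infinity>"
      by simp
    then show "0 < r \<and> ennreal (s / 2) * emeasure lebesgue (par_cyl \<alpha> t x r) \<le>
        (\<integral>\<^sup>+y\<in>par_cyl \<alpha> t x r. u y \<partial>lebesgue)"
      using r less_imp_le[OF nn_set_integral_tail_gt[OF h par_cyl_in_sets_lebesgue _ s gt]]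
      unfolding u_def by blast
  qed
  then have half: "ennreal (s / 2) * emeasure lebesgue E \<le> ennreal (3 ^ (DIM('n) + 2)) * (\<integral>\<^sup>+y. u y \<partial>lebesgue)"
    unfolding emeasure_lebesgue_inner_regular[OF \<open>E \<in> sets lebesgue\<close>] SUP_mult_left_ennreal
    by (intro SUP_least) auto
  have "ennreal s * emeasure lebesgue E = 2 * (ennreal (s / 2) * emeasure lebesgue E)"
    using ennreal_mult[of 2 "s / 2"] s by (simp add: mult.assoc)
  also have "\<dots> \<le> 2 * (ennreal (3 ^ (DIM('n) + 2)) * (\<integral>\<^sup>+y. u y \<partial>lebesgue))"
    by (rule mult_left_mono[OF half]) simp
  also have "\<dots> = ennreal (2 * 3 ^ (DIM('n) + 2)) * (\<integral>\<^sup>+y. u y \<partial>lebesgue)"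
    by (simp add: ennreal_mult mult.assoc)
  finally show ?thesis
    unfolding E_def u_def .
qed

section \<open>N-functions\<close>

locale structural_N_function =
  fixes \<phi> :: "real \<Rightarrow> real"
  assumes N_function: "N_function \<phi>" and structural: "structural \<phi>"
begin

abbreviation \<phi>' :: "real \<Rightarrow> real" where "\<phi>' \<equiv> Nder \<phi>"

lemma phi_zero [simp]: "\<phi> 0 = 0"
  using N_function unfolding N_function_def by auto

lemma phi_nonneg: "0 \<le> t \<Longrightarrow> 0 \<le> \<phi> t"
  using N_function unfolding N_function_def by auto

lemma Nder_zero: "\<phi>' 0 = 0"
  using N_function unfolding N_function_def by auto

lemma Nder_pos: "0 < t \<Longrightarrow> 0 < \<phi>' t"
  using N_function unfolding N_function_def by auto

lemma Nder_mono: "0 \<le> s \<Longrightarrow> s \<le> t \<Longrightarrow> \<phi>' s \<le> \<phi>' t"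
  using N_function unfolding N_function_def by (auto intro: mono_onD)

lemma filterlim_Nder_at_top: "filterlim \<phi>' at_top at_top"
  using N_function unfolding N_function_def by auto

lemma phi_has_right_derivative: "0 \<le> t \<Longrightarrow> \<exists>d. (\<phi> has_real_derivative d) (at t within {t..})"
  using N_function unfolding N_function_def by auto

lemma Nder_nonneg: "0 \<le> t \<Longrightarrow> 0 \<le> \<phi>' t"
  using Nder_zero Nder_mono[of 0 t] by simp

lemma phi_differentiable: "0 < t \<Longrightarrow> \<phi> differentiable (at t)"
  and has_real_derivative_Nder: "0 < t \<Longrightarrow> (\<phi>' has_real_derivative deriv \<phi>' t) (at t)"
  and Nder_elasticity: "\<exists>c1 c2. 0 < c1 \<and> (\<forall>t>0. c1 * \<phi>' t \<le> t * deriv \<phi>' t \<and> t * deriv \<phi>' t \<le> c2 * \<phi>' t)"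
  using structural unfolding structural_def by (auto simp: DERIV_deriv_iff_real_differentiable)

lemma has_real_derivative_phi: "0 < t \<Longrightarrow> (\<phi> has_real_derivative \<phi>' t) (at t)"
proof -
  assume "0 < t"
  then have "(\<phi> has_real_derivative deriv \<phi> t) (at t)"
    by (simp add: DERIV_deriv_iff_real_differentiable phi_differentiable)
  moreover from this have "\<phi>' t = deriv \<phi> t"
    by (rule Nder_eqI[OF has_field_derivative_at_within])
  ultimately show ?thesis
    by simp
qed

lemma continuous_on_phi: "continuous_on {0..} \<phi>"
proof (subst continuous_on_eq_continuous_within, intro ballI)
  fix t :: real assume "t \<in> {0..}"
  show "continuous (at t within {0..}) \<phi>"
  proof (cases "t = 0")
    case True
    obtain d where "(\<phi> has_real_derivative d) (at 0 within {0..})"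
      using phi_has_right_derivative[of 0] by auto
    then show ?thesis
      using True by (simp add: DERIV_continuous)
  next
    case False
    then show ?thesis
      using \<open>t \<in> {0..}\<close> has_real_derivative_phi[of t]
      by (auto intro: continuous_at_imp_continuous_at_within DERIV_isCont)
  qed
qed

lemma phi_mean_value:
  assumes "0 \<le> u" "u < t"
  obtains \<xi> where "u < \<xi>" "\<xi> < t" "\<phi> t - \<phi> u = (t - u) * \<phi>' \<xi>"
proof -
  have "continuous_on {u..t} \<phi>"
    using continuous_on_phi by (rule continuous_on_subset) (use assms in auto)
  moreover have "\<phi> differentiable (at x)" if "u < x" "x < t" for x
    using has_real_derivative_phi[of x] that assms real_differentiable_def by auto
  ultimately obtain l \<xi> where \<xi>: "u < \<xi>" "\<xi> < t" "(\<phi> has_real_derivative l) (at \<xi>)" "\<phi> t - \<phi> u = (t - u) * l"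
    using MVT[OF assms(2)] by blast
  moreover have "l = \<phi>' \<xi>"
    using DERIV_unique[OF \<xi>(3) has_real_derivative_phi] \<xi>(1) assms by auto
  ultimately show ?thesis
    using that by blast
qed

lemma phi_le_mult_Nder: "0 \<le> t \<Longrightarrow> \<phi> t \<le> t * \<phi>' t"
proof (cases "t = 0")
  case False
  assume "0 \<le> t"
  then obtain \<xi> where "0 < \<xi>" "\<xi> < t" "\<phi> t = t * \<phi>' \<xi>"
    using phi_mean_value[of 0 t] False by auto
  then show ?thesis
    using Nder_mono[of \<xi> t] \<open>0 \<le> t\<close> by (simp add: mult_left_mono)
qed simp

lemma phi_tangent_le: "0 \<le> u \<Longrightarrow> u \<le> t \<Longrightarrow> \<phi> u + (t - u) * \<phi>' u \<le> \<phi> t"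
proof (cases "u = t")
  case False
  assume "0 \<le> u" "u \<le> t"
  then obtain \<xi> where "u < \<xi>" "\<xi> < t" "\<phi> t - \<phi> u = (t - u) * \<phi>' \<xi>"
    using phi_mean_value[of u t] False by auto
  then show ?thesis
    using Nder_mono[of u \<xi>] \<open>0 \<le> u\<close> \<open>u \<le> t\<close> by (smt (verit) mult_left_mono)
qed simp

lemma mult_Nder_le_phi_double: "0 \<le> t \<Longrightarrow> t * \<phi>' t \<le> \<phi> (2 * t)"
  using phi_tangent_le[of t "2 * t"] phi_nonneg[of t] by simp

lemma phi_div_le_Nder: "0 < t \<Longrightarrow> \<phi> t / t \<le> \<phi>' t"
  using phi_le_mult_Nder[of t] by (simp add: divide_le_eq mult.commute)

lemma phi_div_Nder_le: "0 < t \<Longrightarrow> \<phi> t / \<phi>' t \<le> t"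
  using phi_le_mult_Nder[of t] Nder_pos[of t] by (simp add: divide_le_eq)

lemma phi_mono: "0 \<le> u \<Longrightarrow> u \<le> t \<Longrightarrow> \<phi> u \<le> \<phi> t"
  using phi_tangent_le[of u t] Nder_nonneg[of u] by (smt (verit) mult_nonneg_nonneg)

lemma phi_pos: "0 < t \<Longrightarrow> 0 < \<phi> t"
  using phi_tangent_le[of "t / 2" t] phi_nonneg[of "t / 2"] Nder_pos[of "t / 2"]
  by (smt (verit) field_sum_of_halves mult_pos_pos)

lemma Nder_doubling: "\<exists>A B. 1 < B \<and> 0 < A \<and> (\<forall>t>0. B * \<phi>' t \<le> \<phi>' (2 * t) \<and> \<phi>' (2 * t) \<le> A * \<phi>' t)"
proof -
  obtain c1 c2 where c: "0 < c1" "\<And>t. 0 < t \<Longrightarrow> c1 * \<phi>' t \<le> t * deriv \<phi>' t"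
    "\<And>t. 0 < t \<Longrightarrow> t * deriv \<phi>' t \<le> c2 * \<phi>' t"
    using Nder_elasticity by blast
  have "2 powr c1 * \<phi>' t \<le> \<phi>' (2 * t) \<and> \<phi>' (2 * t) \<le> 2 powr c2 * \<phi>' t" if "0 < t" for t
    using elasticity_lower_bound_imp_growth[of t "2 * t" \<phi>' "deriv \<phi>'" c1]
      elasticity_upper_bound_imp_growth[of t "2 * t" \<phi>' "deriv \<phi>'" c2]
      that has_real_derivative_Nder Nder_pos c(2,3) by simp
  moreover have "1 < 2 powr c1"
    using c(1) by simp
  ultimately show ?thesis
    by (intro exI[of _ "2 powr c2"] exI[of _ "2 powr c1"]) simp
qed

lemma bdd_above_conj_fn: "0 \<le> b \<Longrightarrow> bdd_above {s * b - \<phi> s | s. 0 \<le> s}"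
proof -
  assume b: "0 \<le> b"
  obtain u where u: "0 \<le> u" "b \<le> \<phi>' u"
    using filterlim_Nder_at_top unfolding filterlim_at_top eventually_at_top_linorder
    by (metis linear order_refl)
  have "s * b - \<phi> s \<le> u * b" if "0 \<le> s" for s
  proof (cases "u \<le> s")
    case True
    have "(s - u) * b \<le> (s - u) * \<phi>' u"
      using True u by (intro mult_left_mono) auto
    then show ?thesis
      using phi_tangent_le[OF u(1) True] phi_nonneg[OF u(1)] by (simp add: algebra_simps)
  next
    case False
    then show ?thesis
      using b phi_nonneg[OF that] mult_right_mono[of s u b] by simp
  qed
  then show ?thesis
    unfolding bdd_above_def by blast
qed

lemma Young_conj_fn: "0 \<le> b \<Longrightarrow> 0 \<le> s \<Longrightarrow> s * b - \<phi> s \<le> conj_fn \<phi> b"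
  unfolding conj_fn_def by (rule cSup_upper) (use bdd_above_conj_fn in auto)

lemma conj_fn_leI: "(\<And>s. 0 \<le> s \<Longrightarrow> s * b - \<phi> s \<le> M) \<Longrightarrow> conj_fn \<phi> b \<le> M"
  unfolding conj_fn_def by (rule cSup_least) auto

lemma conj_fn_nonneg: "0 \<le> b \<Longrightarrow> 0 \<le> conj_fn \<phi> b"
  using Young_conj_fn[of b 0] by simp

lemma conj_fn_zero [simp]: "conj_fn \<phi> 0 = 0"
  using conj_fn_leI[of 0 0] conj_fn_nonneg[of 0] phi_nonneg by force

lemma conj_fn_mono: "0 \<le> b \<Longrightarrow> b \<le> b' \<Longrightarrow> conj_fn \<phi> b \<le> conj_fn \<phi> b'"
  by (rule conj_fn_leI) (smt (verit) Young_conj_fn mult_left_mono)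

definition superlevel_measure ::
  "real \<Rightarrow> (real \<times> 'n::euclidean_space \<Rightarrow> 'a::real_normed_vector) \<Rightarrow> (real \<times> 'n \<Rightarrow> 'b::real_normed_vector) \<Rightarrow> ennreal"
  where "superlevel_measure t F G =
    emeasure lebesgue {z. ennreal t < maxfn (t / \<phi>' t) F z} +
    emeasure lebesgue {z. ennreal (\<phi>' t) < maxfn (t / \<phi>' t) G z}"

lemma phi_mult_superlevel_measure_le:
  fixes F :: "real \<times> 'n::euclidean_space \<Rightarrow> 'a::real_normed_vector"
    and G :: "real \<times> 'n \<Rightarrow> 'b::real_normed_vector"
  assumes F: "F \<in> borel_measurable lebesgue" and G: "G \<in> borel_measurable lebesgue" and t: "0 < t"
  shows "ennreal (\<phi> t) * superlevel_measure t F G \<le> ennreal (2 * 3 ^ (DIM('n) + 2)) *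
    (\<integral>\<^sup>+z. ennreal (\<phi> t / t * (if t / 2 < norm (F z) then norm (F z) else 0)
      + \<phi> t / \<phi>' t * (if \<phi>' t / 2 < norm (G z) then norm (G z) else 0)) \<partial>lebesgue)"
proof -
  define K :: real where "K = 2 * 3 ^ (DIM('n) + 2)"
  define tail_F where "tail_F z = (if t / 2 < norm (F z) then norm (F z) else 0)" for z
  define tail_G where "tail_G z = (if \<phi>' t / 2 < norm (G z) then norm (G z) else 0)" for z
  have tails_meas [measurable]: "tail_F \<in> borel_measurable lebesgue" "tail_G \<in> borel_measurable lebesgue"
    unfolding tail_F_def tail_G_def using F G by measurable
  have tails_nonneg: "0 \<le> tail_F z" "0 \<le> tail_G z" for z
    unfolding tail_F_def tail_G_def by simp_all
  have \<alpha>: "0 < t / \<phi>' t" and pos: "0 < \<phi>' t" "0 \<le> \<phi> t / t" "0 \<le> \<phi> t / \<phi>' t"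
    using t Nder_pos[OF t] phi_nonneg[of t] by simp_all
  have "ennreal (\<phi> t / t * t) * emeasure lebesgue {z. ennreal t < maxfn (t / \<phi>' t) F z}
      \<le> ennreal K * (\<integral>\<^sup>+z. ennreal (\<phi> t / t * tail_F z) \<partial>lebesgue)"
    using emeasure_maxfn_gt_le[OF F \<alpha> t] unfolding K_def tail_F_def[symmetric]
    by (rule ennreal_mult_le_nn_integral_scale[OF pos(2) tails_meas(1) tails_nonneg(1)])
  moreover have "ennreal (\<phi> t / \<phi>' t * \<phi>' t) * emeasure lebesgue {z. ennreal (\<phi>' t) < maxfn (t / \<phi>' t) G z}
      \<le> ennreal K * (\<integral>\<^sup>+z. ennreal (\<phi> t / \<phi>' t * tail_G z) \<partial>lebesgue)"
    using emeasure_maxfn_gt_le[OF G \<alpha> pos(1)] unfolding K_def tail_G_def[symmetric]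
    by (rule ennreal_mult_le_nn_integral_scale[OF pos(3) tails_meas(2) tails_nonneg(2)])
  ultimately have "ennreal (\<phi> t) * superlevel_measure t F G \<le>
      ennreal K * ((\<integral>\<^sup>+z. ennreal (\<phi> t / t * tail_F z) \<partial>lebesgue) +
        (\<integral>\<^sup>+z. ennreal (\<phi> t / \<phi>' t * tail_G z) \<partial>lebesgue))"
    using t pos(1) unfolding superlevel_measure_def distrib_left by (intro add_mono) simp_all
  also have "(\<integral>\<^sup>+z. ennreal (\<phi> t / t * tail_F z) \<partial>lebesgue) +
        (\<integral>\<^sup>+z. ennreal (\<phi> t / \<phi>' t * tail_G z) \<partial>lebesgue) =
      (\<integral>\<^sup>+z. ennreal (\<phi> t / t * tail_F z) + ennreal (\<phi> t / \<phi>' t * tail_G z) \<partial>lebesgue)"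
    by (intro nn_integral_add[symmetric]) measurable
  also have "\<dots> = (\<integral>\<^sup>+z. ennreal (\<phi> t / t * tail_F z + \<phi> t / \<phi>' t * tail_G z) \<partial>lebesgue)"
    using tails_nonneg pos by (intro nn_integral_cong ennreal_plus[symmetric] mult_nonneg_nonneg) auto
  finally show ?thesis
    unfolding K_def tail_F_def tail_G_def .
qed

end

locale doubling_N_function = structural_N_function +
  fixes A B :: real
  assumes B_gt_1: "1 < B" and A_pos: "0 < A"
    and Nder_double: "\<And>t. 0 < t \<Longrightarrow> B * \<phi>' t \<le> \<phi>' (2 * t) \<and> \<phi>' (2 * t) \<le> A * \<phi>' t"
begin

lemma phi_doubling: "0 \<le> t \<Longrightarrow> \<phi> (2 * t) \<le> 4 * A\<^sup>2 * \<phi> t"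
proof (cases "t = 0")
  case False
  assume "0 \<le> t"
  then have t: "0 < t"
    using False by simp
  have "\<phi> (2 * t) \<le> 2 * t * \<phi>' (2 * t)"
    using phi_le_mult_Nder[of "2 * t"] t by simp
  also have "\<dots> \<le> 2 * t * (A * (A * \<phi>' (t / 2)))"
  proof -
    have "\<phi>' t \<le> A * \<phi>' (t / 2)"
      using Nder_double[of "t / 2"] t by simp
    then have "\<phi>' (2 * t) \<le> A * (A * \<phi>' (t / 2))"
      using Nder_double[of t] t A_pos by (meson mult_left_mono order_trans less_imp_le)
    then show ?thesis
      using t by (simp add: mult_left_mono)
  qed
  also have "\<dots> = 4 * A\<^sup>2 * (t / 2 * \<phi>' (t / 2))"
    by (simp add: power2_eq_square)
  also have "\<dots> \<le> 4 * A\<^sup>2 * \<phi> t"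
    using mult_Nder_le_phi_double[of "t / 2"] t by (intro mult_left_mono) simp_all
  finally show ?thesis .
qed simp

lemma Nder_power_growth: "0 < t \<Longrightarrow> B ^ N * \<phi>' t \<le> \<phi>' (2 ^ N * t)"
proof (induction N)
  case (Suc N)
  have "B ^ Suc N * \<phi>' t = B * (B ^ N * \<phi>' t)"
    by simp
  also have "\<dots> \<le> B * \<phi>' (2 ^ N * t)"
    using Suc B_gt_1 by (intro mult_left_mono) auto
  also have "\<dots> \<le> \<phi>' (2 ^ Suc N * t)"
    using Nder_double[of "2 ^ N * t"] Suc.prems by (simp add: mult.assoc)
  finally show ?case .
qed simp

definition four_steps :: nat where "four_steps = (LEAST N. 4 \<le> B ^ N)"

lemma Nder_four_steps: "0 < t \<Longrightarrow> 4 * \<phi>' t \<le> \<phi>' (2 ^ four_steps * t)"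
proof -
  assume t: "0 < t"
  obtain N :: nat where "4 < B ^ N"
    using real_arch_pow[OF B_gt_1] by blast
  then have "4 \<le> B ^ four_steps"
    unfolding four_steps_def by (rule LeastI[OF less_imp_le])
  then have "4 * \<phi>' t \<le> B ^ four_steps * \<phi>' t"
    by (rule mult_right_mono) (use Nder_pos[OF t] in simp)
  then show ?thesis
    using Nder_power_growth[OF t] by (rule order_trans)
qed

lemma mult_le_conj_fn:
  assumes s: "0 < s" and b: "0 \<le> b" and Nder_s: "\<phi>' s \<le> 2 * b"
  shows "s * b \<le> 2 ^ (four_steps + 1) * conj_fn \<phi> b"
proof -
  define u where "u = s / 2 ^ four_steps"
  have u: "0 < u" "s = 2 ^ four_steps * u"
    using s unfolding u_def by simp_all
  have "2 * \<phi>' u \<le> b"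
    using Nder_four_steps[OF u(1)] Nder_s u(2) by simp
  then have "2 * (u * \<phi>' u) \<le> u * b"
    using mult_left_mono[of "2 * \<phi>' u" b u] u(1) by (simp add: mult.left_commute)
  then have "u * b \<le> 2 * conj_fn \<phi> b"
    using phi_le_mult_Nder[of u] Young_conj_fn[OF b, of u] u(1) by linarith
  then show ?thesis
    using u(2) by (simp add: mult.assoc)
qed

lemma phi_dilation_lower:
  assumes "0 \<le> u"
  shows "2 ^ (four_steps + 2) * \<phi> u \<le> \<phi> (2 ^ (four_steps + 1) * u)"
proof (cases "u = 0")
  case False
  then have u: "0 < u"
    using assms by simp
  have "2 ^ (four_steps + 2) * \<phi> u \<le> 2 ^ (four_steps + 2) * (u * \<phi>' u)"
    using phi_le_mult_Nder[OF assms] by simp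
  also have "\<dots> = 2 ^ four_steps * u * (4 * \<phi>' u)"
    by (simp add: power_add algebra_simps)
  also have "\<dots> \<le> 2 ^ four_steps * u * \<phi>' (2 ^ four_steps * u)"
    by (rule mult_left_mono[OF Nder_four_steps[OF u]]) (use u in simp)
  also have "\<dots> \<le> \<phi> (2 * (2 ^ four_steps * u))"
    by (rule mult_Nder_le_phi_double) (use u in simp)
  finally show ?thesis
    by (simp add: mult.assoc)
qed simp

lemma conj_fn_doubling: "0 \<le> b \<Longrightarrow> conj_fn \<phi> (2 * b) \<le> 2 ^ (four_steps + 2) * conj_fn \<phi> b"
proof (rule conj_fn_leI)
  fix s :: real assume b: "0 \<le> b" and s: "0 \<le> s"
  define u where "u = s / 2 ^ (four_steps + 1)"
  have u: "0 \<le> u" "s = 2 ^ (four_steps + 1) * u"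
    using s unfolding u_def by simp_all
  have "s * (2 * b) = 2 ^ (four_steps + 2) * (u * b)"
    using u(2) by (simp add: power_add algebra_simps)
  then have "s * (2 * b) - \<phi> s \<le> 2 ^ (four_steps + 2) * (u * b - \<phi> u)"
    using phi_dilation_lower[OF u(1)] u(2) by (simp add: right_diff_distrib)
  also have "\<dots> \<le> 2 ^ (four_steps + 2) * conj_fn \<phi> b"
    by (rule mult_left_mono[OF Young_conj_fn[OF b u(1)]]) simp
  finally show "s * (2 * b) - \<phi> s \<le> 2 ^ (four_steps + 2) * conj_fn \<phi> b" .
qed

lemma sum_phi_levels_le:
  assumes \<gamma>: "0 < \<gamma>" and a: "0 \<le> a"
  shows "(\<Sum>j\<in>{1..m}. \<phi> (2 ^ j * \<gamma>) / (2 ^ j * \<gamma>) * (if 2 ^ j * \<gamma> / 2 < a then a else 0))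
    \<le> 4 * A ^ 3 * B / (B - 1) * \<phi> a"
proof (cases "a = 0")
  case True
  have "\<not> 2 ^ j * \<gamma> / 2 < a" for j
  proof -
    have "0 < 2 ^ j * \<gamma>"
      using \<gamma> by simp
    then show ?thesis
      using True by linarith
  qed
  then show ?thesis
    using True by simp
next
  case False
  then have a: "0 < a"
    using a by simp
  define J where "J = {j \<in> {1..m}. 2 ^ j * \<gamma> \<le> 2 * a}"
  have term_le: "\<phi> t / t * (if t / 2 < a then a else 0) \<le> a * (if t \<le> 2 * a then \<phi>' t else 0)"
    if "0 < t" for t
  proof (cases "t / 2 < a")
    case True
    have "\<phi> t / t * a \<le> \<phi>' t * a"
      using phi_div_le_Nder[OF that] a by (intro mult_right_mono) simp_all
    then show ?thesis
      using True by (simp add: mult.commute)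
  qed (use a Nder_nonneg that in simp)
  have "(\<Sum>j\<in>{1..m}. \<phi> (2 ^ j * \<gamma>) / (2 ^ j * \<gamma>) * (if 2 ^ j * \<gamma> / 2 < a then a else 0))
      \<le> a * (\<Sum>j\<in>J. \<phi>' (2 ^ j * \<gamma>))"
    unfolding J_def sum.inter_filter[OF finite_atLeastAtMost] sum_distrib_left
    using \<gamma> by (intro sum_mono term_le) simp
  also have "\<dots> \<le> a * (B / (B - 1) * \<phi>' (2 * a))"
  proof (intro mult_left_mono sum_le_geometric_growth[OF B_gt_1])
    show "B * \<phi>' (2 ^ j * \<gamma>) \<le> \<phi>' (2 ^ Suc j * \<gamma>)" for j
      using Nder_double[of "2 ^ j * \<gamma>"] \<gamma> by (simp add: mult.assoc)
  qed (use a \<gamma> Nder_nonneg Nder_mono in \<open>auto simp: J_def\<close>)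
  also have "\<dots> \<le> a * (B / (B - 1) * (A * \<phi>' a))"
    using Nder_double[OF a] a B_gt_1 by (intro mult_left_mono) auto
  also have "\<dots> = B / (B - 1) * A * (a * \<phi>' a)"
    by (simp add: mult_ac)
  also have "\<dots> \<le> B / (B - 1) * A * \<phi> (2 * a)"
    using mult_Nder_le_phi_double[of a] a A_pos B_gt_1 by (intro mult_left_mono) auto
  also have "\<dots> \<le> B / (B - 1) * A * (4 * A\<^sup>2 * \<phi> a)"
    using phi_doubling[of a] a A_pos B_gt_1 by (intro mult_left_mono) auto
  also have "\<dots> = 4 * A ^ 3 * B / (B - 1) * \<phi> a"
    by (simp add: power2_eq_square power3_eq_cube)
  finally show ?thesis .
qed

lemma sum_conj_levels_le:
  assumes \<gamma>: "0 < \<gamma>" and b: "0 \<le> b"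
  shows "(\<Sum>j\<in>{1..m}. \<phi> (2 ^ j * \<gamma>) / \<phi>' (2 ^ j * \<gamma>) * (if \<phi>' (2 ^ j * \<gamma>) / 2 < b then b else 0))
    \<le> 2 ^ (four_steps + 2) * conj_fn \<phi> b"
proof -
  define J where "J = {j \<in> {1..m}. \<phi>' (2 ^ j * \<gamma>) < 2 * b}"
  have term_le: "\<phi> t / \<phi>' t * (if \<phi>' t / 2 < b then b else 0) \<le> b * (if \<phi>' t < 2 * b then t else 0)"
    if "0 < t" for t
  proof (cases "\<phi>' t / 2 < b")
    case True
    have "\<phi> t / \<phi>' t * b \<le> t * b"
      using phi_div_Nder_le[OF that] b by (rule mult_right_mono)
    then show ?thesis
      using True by (simp add: mult.commute)
  qed (use b that in simp)
  have "(\<Sum>j\<in>{1..m}. \<phi> (2 ^ j * \<gamma>) / \<phi>' (2 ^ j * \<gamma>) * (if \<phi>' (2 ^ j * \<gamma>) / 2 < b then b else 0))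
      \<le> b * (\<Sum>j\<in>J. 2 ^ j * \<gamma>)"
    unfolding J_def sum.inter_filter[OF finite_atLeastAtMost] sum_distrib_left
    using \<gamma> by (intro sum_mono term_le) simp
  also have "\<dots> \<le> 2 ^ (four_steps + 2) * conj_fn \<phi> b"
  proof (cases "J = {}")
    case True
    then show ?thesis
      using conj_fn_nonneg[OF b] by simp
  next
    case False
    define s where "s = 2 ^ Max J * \<gamma>"
    have "Max J \<in> J"
      using False by (intro Max_in) (simp_all add: J_def)
    then have s: "0 < s" "\<phi>' s \<le> 2 * b"
      using \<gamma> unfolding s_def J_def by auto
    have "(\<Sum>j\<in>J. 2 ^ j * \<gamma>) \<le> 2 / (2 - 1) * s"
    proof (rule sum_le_geometric_growth)
      show "2 ^ j * \<gamma> \<le> s" if "j \<in> J" for j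
        using that \<gamma> unfolding s_def J_def by (simp add: power_increasing)
    qed (use \<gamma> s(1) in \<open>auto simp: J_def\<close>)
    then have "b * (\<Sum>j\<in>J. 2 ^ j * \<gamma>) \<le> 2 * (s * b)"
      using b mult_left_mono by (fastforce simp: mult_ac)
    also have "\<dots> \<le> 2 * (2 ^ (four_steps + 1) * conj_fn \<phi> b)"
      using mult_le_conj_fn[OF s(1) b s(2)] by linarith
    finally show ?thesis
      by simp
  qed
  finally show ?thesis .
qed

lemma sum_levels_le:
  assumes "0 < \<gamma>" "0 \<le> a" "0 \<le> b"
  shows "(\<Sum>j\<in>{1..m}. \<phi> (2 ^ j * \<gamma>) / (2 ^ j * \<gamma>) * (if 2 ^ j * \<gamma> / 2 < a then a else 0) +
      \<phi> (2 ^ j * \<gamma>) / \<phi>' (2 ^ j * \<gamma>) * (if \<phi>' (2 ^ j * \<gamma>) / 2 < b then b else 0))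
    \<le> (4 * A ^ 3 * B / (B - 1) + 2 ^ (four_steps + 2)) * (\<phi> a + conj_fn \<phi> b)"
proof -
  have "(\<Sum>j\<in>{1..m}. \<phi> (2 ^ j * \<gamma>) / (2 ^ j * \<gamma>) * (if 2 ^ j * \<gamma> / 2 < a then a else 0) +
      \<phi> (2 ^ j * \<gamma>) / \<phi>' (2 ^ j * \<gamma>) * (if \<phi>' (2 ^ j * \<gamma>) / 2 < b then b else 0))
    \<le> 4 * A ^ 3 * B / (B - 1) * \<phi> a + 2 ^ (four_steps + 2) * conj_fn \<phi> b"
    unfolding sum.distrib using assms by (intro add_mono sum_phi_levels_le sum_conj_levels_le)
  also have "\<dots> \<le> (4 * A ^ 3 * B / (B - 1) + 2 ^ (four_steps + 2)) * (\<phi> a + conj_fn \<phi> b)"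
    unfolding distrib_right distrib_left
    using assms A_pos B_gt_1 phi_nonneg[of a] conj_fn_nonneg[of b]
    by (intro add_mono) (simp_all add: mult_right_mono)
  finally show ?thesis .
qed

text \<open>The factor \<open>2 \<cdot> 3 ^ (n + 2)\<close> is the weak-type constant of \<open>emeasure_maxfn_gt_le\<close>; the
  bracket collects the constants of \<open>sum_phi_levels_le\<close> and \<open>sum_conj_levels_le\<close>.\<close>

definition level_constant :: "nat \<Rightarrow> real" where
  "level_constant n = 2 * 3 ^ (n + 2) * (4 * A ^ 3 * B / (B - 1) + 2 ^ (four_steps + 2))"

lemma level_constant_pos: "0 < level_constant n"
  unfolding level_constant_def using A_pos B_gt_1 by (simp add: add_pos_pos)

lemma sum_phi_mult_superlevel_measure_le:
  fixes F :: "real \<times> 'n::euclidean_space \<Rightarrow> 'a::real_normed_vector"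
    and G :: "real \<times> 'n \<Rightarrow> 'b::real_normed_vector"
  assumes F: "F \<in> borel_measurable lebesgue" and G: "G \<in> borel_measurable lebesgue"
    and int_F: "integrable lebesgue (\<lambda>z. \<phi> (norm (F z)))"
    and int_G: "integrable lebesgue (\<lambda>z. conj_fn \<phi> (norm (G z)))"
    and \<gamma>: "0 < \<gamma>"
  shows "(\<Sum>j\<in>{1..m}. ennreal (\<phi> (2 ^ j * \<gamma>)) * superlevel_measure (2 ^ j * \<gamma>) F G) \<le>
    ennreal (level_constant DIM('n) *
      ((\<integral>z. \<phi> (norm (F z)) \<partial>lebesgue) + (\<integral>z. conj_fn \<phi> (norm (G z)) \<partial>lebesgue)))"
proof -
  define K :: real where "K = 2 * 3 ^ (DIM('n) + 2)"
  define C where "C = 4 * A ^ 3 * B / (B - 1) + 2 ^ (four_steps + 2)"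
  define R where "R j z = \<phi> (2 ^ j * \<gamma>) / (2 ^ j * \<gamma>) *
      (if 2 ^ j * \<gamma> / 2 < norm (F z) then norm (F z) else 0) +
    \<phi> (2 ^ j * \<gamma>) / \<phi>' (2 ^ j * \<gamma>) *
      (if \<phi>' (2 ^ j * \<gamma>) / 2 < norm (G z) then norm (G z) else 0)" for j z
  define \<Phi> where "\<Phi> z = \<phi> (norm (F z)) + conj_fn \<phi> (norm (G z))" for z
  have R_nonneg: "0 \<le> R j z" for j z
    unfolding R_def using \<gamma> Nder_pos[of "2 ^ j * \<gamma>"] phi_nonneg[of "2 ^ j * \<gamma>"] by simp
  have R_meas: "(\<lambda>z. ennreal (R j z)) \<in> borel_measurable lebesgue" for j
    unfolding R_def using F G by measurable
  have C: "0 \<le> C"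
    unfolding C_def using A_pos B_gt_1 by simp
  have sum_R_le: "(\<Sum>j\<in>{1..m}. R j z) \<le> C * \<Phi> z" for z
    unfolding R_def C_def \<Phi>_def using \<gamma> by (intro sum_levels_le) simp_all
  have "(\<Sum>j\<in>{1..m}. ennreal (\<phi> (2 ^ j * \<gamma>)) * superlevel_measure (2 ^ j * \<gamma>) F G) \<le>
      (\<Sum>j\<in>{1..m}. ennreal K * (\<integral>\<^sup>+z. ennreal (R j z) \<partial>lebesgue))"
    unfolding K_def R_def using \<gamma> by (intro sum_mono phi_mult_superlevel_measure_le F G) simp
  also have "\<dots> = ennreal K * (\<Sum>j\<in>{1..m}. \<integral>\<^sup>+z. ennreal (R j z) \<partial>lebesgue)"
    by (simp add: sum_distrib_left)
  also have "\<dots> = ennreal K * (\<integral>\<^sup>+z. ennreal (\<Sum>j\<in>{1..m}. R j z) \<partial>lebesgue)"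
    using R_nonneg by (simp add: nn_integral_sum[symmetric] R_meas sum_ennreal)
  also have "\<dots> \<le> ennreal K * (\<integral>\<^sup>+z. ennreal (C * \<Phi> z) \<partial>lebesgue)"
    using sum_R_le by (intro mult_left_mono nn_integral_mono ennreal_leI) auto
  also have "(\<integral>\<^sup>+z. ennreal (C * \<Phi> z) \<partial>lebesgue) = ennreal (C * (\<integral>z. \<Phi> z \<partial>lebesgue))"
  proof -
    have "integrable lebesgue \<Phi>"
      unfolding \<Phi>_def using int_F int_G by (rule Bochner_Integration.integrable_add)
    then have "(\<integral>\<^sup>+z. ennreal (C * \<Phi> z) \<partial>lebesgue) = ennreal (\<integral>z. C * \<Phi> z \<partial>lebesgue)"
      using C phi_nonneg conj_fn_nonneg unfolding \<Phi>_def
      by (intro nn_integral_eq_integral integrable_mult_right) (auto intro!: add_nonneg_nonneg)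
    then show ?thesis
      by simp
  qed
  also have "ennreal K * ennreal (C * (\<integral>z. \<Phi> z \<partial>lebesgue)) = ennreal (level_constant DIM('n) *
      ((\<integral>z. \<phi> (norm (F z)) \<partial>lebesgue) + (\<integral>z. conj_fn \<phi> (norm (G z)) \<partial>lebesgue)))"
    using int_F int_G unfolding K_def C_def level_constant_def \<Phi>_def
    by (simp add: ennreal_mult'[symmetric] mult.assoc)
  finally show ?thesis .
qed

lemma exists_level_superlevel_measure_le:
  fixes F :: "real \<times> 'n::euclidean_space \<Rightarrow> 'a::real_normed_vector"
    and G :: "real \<times> 'n \<Rightarrow> 'b::real_normed_vector"
  assumes F: "F \<in> borel_measurable lebesgue" and G: "G \<in> borel_measurable lebesgue"
    and int_F: "integrable lebesgue (\<lambda>z. \<phi> (norm (F z)))"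
    and int_G: "integrable lebesgue (\<lambda>z. conj_fn \<phi> (norm (G z)))"
    and \<gamma>: "0 < \<gamma>" and m: "1 \<le> m"
  obtains t where "\<gamma> \<le> t" "t \<le> 2 ^ m * \<gamma>"
    "superlevel_measure t F G \<le> ennreal (level_constant DIM('n) *
      ((\<integral>z. \<phi> (norm (F z)) \<partial>lebesgue) + (\<integral>z. conj_fn \<phi> (norm (G z)) \<partial>lebesgue)) / (real m * \<phi> t))"
proof -
  define T where "T = level_constant DIM('n) *
      ((\<integral>z. \<phi> (norm (F z)) \<partial>lebesgue) + (\<integral>z. conj_fn \<phi> (norm (G z)) \<partial>lebesgue))"
  define V where "V j = ennreal (\<phi> (2 ^ j * \<gamma>)) * superlevel_measure (2 ^ j * \<gamma>) F G" for j
  obtain j where j: "j \<in> {1..m}" "of_nat (card {1..m}) * V j \<le> (\<Sum>i\<in>{1..m}. V i)"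
    using ex_card_mult_le_sum[of "{1..m}" V] m by auto
  have "ennreal (real m * \<phi> (2 ^ j * \<gamma>)) * superlevel_measure (2 ^ j * \<gamma>) F G \<le> ennreal T"
    using j(2) sum_phi_mult_superlevel_measure_le[OF F G int_F int_G \<gamma>, of m] phi_nonneg[of "2 ^ j * \<gamma>"] \<gamma>
    unfolding V_def T_def by (simp add: ennreal_mult ennreal_of_nat_eq_real_of_nat mult.assoc)
  moreover have "0 < real m * \<phi> (2 ^ j * \<gamma>)"
    using m \<gamma> phi_pos[of "2 ^ j * \<gamma>"] by simp
  moreover have "\<gamma> \<le> 2 ^ j * \<gamma>" "2 ^ j * \<gamma> \<le> 2 ^ m * \<gamma>"
    using j(1) \<gamma> by (simp_all add: one_le_power power_increasing)
  ultimately show ?thesis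
    using that[of "2 ^ j * \<gamma>"] ennreal_le_divide_of_mult_le unfolding T_def by blast
qed

lemma exists_level_orlicz:
  fixes Q :: "(real \<times> 'n::euclidean_space) set"
    and F :: "real \<times> 'n \<Rightarrow> 'a::real_normed_vector" and G :: "real \<times> 'n \<Rightarrow> 'b::real_normed_vector"
  assumes F: "orlicz \<phi> Q F" and G: "orlicz (conj_fn \<phi>) Q G" and \<gamma>: "0 < \<gamma>" and m: "1 \<le> m"
    and \<gamma>_eq: "\<phi> \<gamma> = (LINT z:Q|lebesgue. \<phi> (norm (F z))) / measure lebesgue Q
      + (LINT z:Q|lebesgue. conj_fn \<phi> (norm (G z))) / measure lebesgue Q"
  shows "\<exists>t. \<gamma> \<le> t \<and> t \<le> 2 ^ m * \<gamma> \<and>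
    emeasure lebesgue {z. ennreal t < maxfn (t / \<phi>' t) (\<lambda>z. indicator Q z *\<^sub>R F z) z}
    + emeasure lebesgue {z. ennreal (\<phi>' t) < maxfn (t / \<phi>' t) (\<lambda>z. indicator Q z *\<^sub>R G z) z}
    \<le> ennreal (level_constant DIM('n) * \<phi> \<gamma> / (real m * \<phi> t) * measure lebesgue Q)"
proof -
  have meas: "(\<lambda>z. indicator Q z *\<^sub>R F z) \<in> borel_measurable lebesgue"
    "(\<lambda>z. indicator Q z *\<^sub>R G z) \<in> borel_measurable lebesgue"
    using F G unfolding orlicz_def set_borel_measurable_def by simp_all
  have phi_QF: "\<phi> (norm (indicator Q z *\<^sub>R F z)) = indicator Q z * \<phi> (norm (F z))"
    and conj_QG: "conj_fn \<phi> (norm (indicator Q z *\<^sub>R G z)) = indicator Q z * conj_fn \<phi> (norm (G z))" for z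
    by (simp_all add: indicator_def)
  have "integrable lebesgue (\<lambda>z. indicator Q z * \<phi> (norm (F z)))"
    using A_pos by (intro integrable_orlicz_doubling[where D = "4 * A\<^sup>2", OF F phi_mono]) (simp_all add: phi_doubling)
  moreover have "integrable lebesgue (\<lambda>z. indicator Q z * conj_fn \<phi> (norm (G z)))"
    by (intro integrable_orlicz_doubling[where D = "2 ^ (four_steps + 2)", OF G conj_fn_mono])
      (use conj_fn_doubling in simp_all)
  ultimately obtain t where t: "\<gamma> \<le> t" "t \<le> 2 ^ m * \<gamma>"
    "superlevel_measure t (\<lambda>z. indicator Q z *\<^sub>R F z) (\<lambda>z. indicator Q z *\<^sub>R G z) \<le>
      ennreal (level_constant DIM('n) * ((LINT z:Q|lebesgue. \<phi> (norm (F z))) +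
        (LINT z:Q|lebesgue. conj_fn \<phi> (norm (G z)))) / (real m * \<phi> t))"
    using exists_level_superlevel_measure_le[OF meas, of \<gamma> m] \<gamma> m
    unfolding phi_QF conj_QG set_lebesgue_integral_def by auto
  \<comment> \<open>if \<open>Q\<close> were null, \<open>\<gamma>_eq\<close> would read \<open>\<phi> \<gamma> = 0\<close> because \<open>x / 0 = 0\<close>\<close>
  moreover have "0 < measure lebesgue Q"
    using \<gamma>_eq phi_pos[OF \<gamma>] by (cases "measure lebesgue Q = 0") (auto simp: measure_nonneg less_le)
  then have "(LINT z:Q|lebesgue. \<phi> (norm (F z))) + (LINT z:Q|lebesgue. conj_fn \<phi> (norm (G z))) =
      \<phi> \<gamma> * measure lebesgue Q"
    using \<gamma>_eq by (simp add: field_simps)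
  ultimately show ?thesis
    unfolding superlevel_measure_def by (intro exI[of _ t]) (simp add: mult_ac)
qed

end

theorem lemma4p1:
  fixes \<phi> :: "real \<Rightarrow> real"
  assumes "N_function \<phi>" and "structural \<phi>"
  shows "\<exists>c>0. \<forall>(\<Omega>::'n::euclidean_space set) t0 (w::real \<times> 'n \<Rightarrow> real) (Dw::real \<times> 'n \<Rightarrow> 'n)
             (G::real \<times> 'n \<Rightarrow> 'n) (\<gamma>::real) (m0::nat).
     open \<Omega> \<and> bounded \<Omega> \<and> 0 < t0 \<and>
     orlicz \<phi> ({-t0..<0} \<times> \<Omega>) w \<and> orlicz \<phi> ({-t0..<0} \<times> \<Omega>) Dw \<and>
     (AE t in lborel. t \<in> {-t0<..<0} \<longrightarrow> W0 \<phi> \<Omega> (\<lambda>x. w (t, x)) (\<lambda>x. Dw (t, x))) \<and>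
     orlicz (conj_fn \<phi>) ({-t0..<0} \<times> \<Omega>) G \<and>
     (\<forall>\<eta>. test_fn ({..<0} \<times> \<Omega>) \<eta> \<longrightarrow>
        (LINT z:({-t0..<0} \<times> \<Omega>)|lebesgue. w z * dt \<eta> z) =
        (LINT z:({-t0..<0} \<times> \<Omega>)|lebesgue. G z \<bullet> gradx \<eta> z)) \<and>
     0 < \<gamma> \<and>
     \<phi> \<gamma> = (LINT z:({-t0..<0} \<times> \<Omega>)|lebesgue. \<phi> (norm (Dw z))) / measure lebesgue ({-t0..<0} \<times> \<Omega>)
           + (LINT z:({-t0..<0} \<times> \<Omega>)|lebesgue. conj_fn \<phi> (norm (G z))) / measure lebesgue ({-t0..<0} \<times> \<Omega>) \<and>
     1 \<le> m0
     \<longrightarrow> (\<exists>lam. \<gamma> \<le> lam \<and> lam \<le> 2 ^ m0 * \<gamma> \<and>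
          emeasure lebesgue {z. ennreal lam < maxfn (lam / Nder \<phi> lam) (\<lambda>z. indicator ({-t0..<0} \<times> \<Omega>) z *\<^sub>R Dw z) z}
        + emeasure lebesgue {z. ennreal (Nder \<phi> lam) < maxfn (lam / Nder \<phi> lam) (\<lambda>z. indicator ({-t0..<0} \<times> \<Omega>) z *\<^sub>R G z) z}
        \<le> ennreal (c * \<phi> \<gamma> / (real m0 * \<phi> lam) * measure lebesgue ({-t0..<0} \<times> \<Omega>)))"
proof -
  interpret structural_N_function \<phi>
    using assms by unfold_locales
  obtain A B where "1 < B" "0 < A" "\<forall>t>0. B * \<phi>' t \<le> \<phi>' (2 * t) \<and> \<phi>' (2 * t) \<le> A * \<phi>' t"
    using Nder_doubling by blast
  then interpret doubling_N_function \<phi> A B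
    by unfold_locales auto
  \<comment> \<open>only the integrability of \<open>Dw\<close> and \<open>G\<close> and the definition of \<open>\<gamma>\<close> are used;
    the equation for \<open>w\<close> and its boundary values play no role in this lemma\<close>
  show ?thesis
  proof (rule exI[of _ "level_constant DIM('n)"], intro conjI allI impI level_constant_pos, goal_cases)
    case (1 \<Omega> t0 w Dw G \<gamma> m0)
    then show ?case
      by (intro exists_level_orlicz) auto
  qed
qed

end
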